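(* Assume $abcd\neq0$. Let $(\omega_M)_{M\ge1}$ be points of $B_{out}$, let $\theta_M>0$ be defined by $\cosh\theta_M=|x(\omega_M)|$, and suppose $M\theta_M\to\theta_*\in(0,\infty)$ as $M\to\infty$. Then \[\lim_{M\to\infty}\frac{\mathcal{E}_M(\omega_M)}{M}=\frac{1}{\sinh^2\theta_*}\left(\frac{\sinh2\theta_*}{2\theta_*}-1\right).\]
   Context: Setting: $C=\begin{bmatrix} a&b\\ c&d\end{bmatrix}$ a fixed $2\times2$ unitary matrix, $\Delta=\det C$, a fixed square root $\Delta^{1/2}$; for each $M\ge1$, $\Gamma_M=\{0,\dots,M-1\}$ and $E_M$ is the linear map on $\ell^2(\Gamma_M;\mathbb{C}^2)$ with $(E_M\varphi)(x)=P\varphi(x+1)+Q\varphi(x-1)$, $\varphi(-1)=\varphi(M)=0$, $P=\begin{bmatrix} a&b\\0&0\end{bmatrix}$, $Q=\begin{bmatrix}0&0\\c&d\end{bmatrix}$. For $\omega$ on the unit circle let $z=\Delta^{1/2}\omega$ and let $\varphi$ be the unique solution of $(z-E_M)\varphi=\delta_0|R\rangle$, $|R\rangle=(0,1)^\top$; the energy is $\mathcal{E}_M(\omega)=\sum_{n=0}^{M-1}\|\varphi(n)\|^2_{\mathbb{C}^2}$. Let $x(\omega)=\frac{\omega+\omega^{-1}}{2|a|}$ and $B_{out}=\{\omega:|\omega|=1,\ |x(\omega)|>1\}$. *)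

theory Defs
  imports Complex_Main
begin

text \<open>The coin matrix C = [[a,b],[c,d]] is unitary: C^* C = I.\<close>
definition unitary2 :: "complex \<Rightarrow> complex \<Rightarrow> complex \<Rightarrow> complex \<Rightarrow> bool" where
  "unitary2 a b c d \<longleftrightarrow>
     cnj a * a + cnj c * c = 1 \<and> cnj b * b + cnj d * d = 1 \<and> cnj a * b + cnj c * d = 0"

definition normsq2 :: "complex \<times> complex \<Rightarrow> real" where
  "normsq2 v = (cmod (fst v))\<^sup>2 + (cmod (snd v))\<^sup>2"

definition extM :: "nat \<Rightarrow> (int \<Rightarrow> complex \<times> complex) \<Rightarrow> int \<Rightarrow> complex \<times> complex" where
  "extM M \<phi> n = (if 0 \<le> n \<and> n < int M then \<phi> n else (0, 0))"

text \<open>(E_M phi)(x) = P phi(x+1) + Q phi(x-1), P = [[a,b],[0,0]], Q = [[0,0],[c,d]].\<close>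
definition EM :: "complex \<Rightarrow> complex \<Rightarrow> complex \<Rightarrow> complex \<Rightarrow> nat \<Rightarrow>
                  (int \<Rightarrow> complex \<times> complex) \<Rightarrow> int \<Rightarrow> complex \<times> complex" where
  "EM a b c d M \<phi> x =
     (let u = extM M \<phi> (x + 1); v = extM M \<phi> (x - 1)
      in (a * fst u + b * snd u, c * fst v + d * snd v))"

text \<open>phi is an element of l^2(Gamma_M; C^2) (zero outside Gamma_M) solving
  (z - E_M) phi = delta_0 |R>, |R> = (0,1).\<close>
definition solves :: "complex \<Rightarrow> complex \<Rightarrow> complex \<Rightarrow> complex \<Rightarrow> nat \<Rightarrow> complex \<Rightarrow>
                      (int \<Rightarrow> complex \<times> complex) \<Rightarrow> bool" where
  "solves a b c d M z \<phi> \<longleftrightarrow>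
     (\<forall>n. \<not> (0 \<le> n \<and> n < int M) \<longrightarrow> \<phi> n = (0, 0)) \<and>
     (\<forall>n. 0 \<le> n \<and> n < int M \<longrightarrow>
        (z * fst (\<phi> n) - fst (EM a b c d M \<phi> n), z * snd (\<phi> n) - snd (EM a b c d M \<phi> n))
          = (if n = 0 then (0, 1) else (0, 0)))"

text \<open>Energy E_M(omega) with z = Delta^(1/2) * omega, where s is the fixed square root of Delta.\<close>
definition energy :: "complex \<Rightarrow> complex \<Rightarrow> complex \<Rightarrow> complex \<Rightarrow> complex \<Rightarrow> nat \<Rightarrow> complex \<Rightarrow> real" where
  "energy a b c d s M \<omega> =
     (let \<phi> = (THE \<phi>. solves a b c d M (s * \<omega>) \<phi>)
      in \<Sum>n\<in>{0..<int M}. normsq2 (\<phi> n))"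

definition xfun :: "complex \<Rightarrow> complex \<Rightarrow> complex" where
  "xfun a \<omega> = (\<omega> + inverse \<omega>) / (2 * of_real (cmod a))"

definition Bout :: "complex \<Rightarrow> complex set" where
  "Bout a = {\<omega>. cmod \<omega> = 1 \<and> cmod (xfun a \<omega>) > 1}"

end

theory Submission
  imports Defs
begin

(* Read from the right end n = M - 1 towards n = 0, the equation (z - E_M) phi = delta_0 |R> is a
   two-term recursion for the reversed amplitudes (p_L(k), p_R(k)) = phi(M - 1 - k) / rho, solved by
     p_L(k) = U_{k-1}(x) beta / mu^k,   p_R(k) = (U_k(x) - delta U_{k-1}(x)) / mu^k,
   with U the Chebyshev polynomials of the second kind at x = Re omega / |a|, mu a unimodular
   square root of d / a and beta, delta explicit constants of the coin and of omega; the
   normalisation rho is fixed by the source at n = 0. The Cassini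
   identity for U collapses the squared norms, so that
     E_M(omega) = (M + 2 |b|^2 sum_{k<M} x U_{k-1}(x) U_k(x)) / (|a|^2 + |b|^2 U_{M-1}(x)^2).
   On B_out we have |x| = cosh theta, hence U_{k-1}(x) = +-sinh (k theta) / sinh theta, the sum is
   explicit, and when M theta_M -> theta_* every term of E_M / M has an explicit limit. *)

lemma unitary2_coeffs:
  assumes "unitary2 a b c d"
  shows "d = (a*d - b*c) * cnj a" and "b = - (a*d - b*c) * cnj c"
    and "(cmod a)^2 + (cmod c)^2 = 1" and "(cmod b)^2 + (cmod d)^2 = 1"
proof -
  have u1: "cnj a * a + cnj c * c = 1" and u2: "cnj b * b + cnj d * d = 1"
    and u3: "cnj a * b + cnj c * d = 0" using assms by (auto simp: unitary2_def)
  have "(a*d - b*c) * cnj a = d * (cnj a * a) - c * (cnj a * b)" by (simp add: algebra_simps)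
  also have "cnj a * b = - cnj c * d" using u3 by (simp add: eq_neg_iff_add_eq_0)
  also have "d * (cnj a * a) - c * (- cnj c * d) = d * (cnj a * a + cnj c * c)"
    by (simp add: algebra_simps)
  finally show "d = (a*d - b*c) * cnj a" using u1 by simp
  have "- (a*d - b*c) * cnj c = b * (cnj c * c) - a * (cnj c * d)" by (simp add: algebra_simps)
  also have "cnj c * d = - cnj a * b" using u3 by (simp add: eq_neg_iff_add_eq_0 add.commute)
  also have "b * (cnj c * c) - a * (- cnj a * b) = b * (cnj a * a + cnj c * c)"
    by (simp add: algebra_simps)
  finally show "b = - (a*d - b*c) * cnj c" using u1 by simp
  have "complex_of_real ((cmod a)^2 + (cmod c)^2) = 1"
    using u1 unfolding of_real_add complex_norm_square by (simp add: mult.commute)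
  then show "(cmod a)^2 + (cmod c)^2 = 1" using of_real_eq_1_iff by blast
  have "complex_of_real ((cmod b)^2 + (cmod d)^2) = 1"
    using u2 unfolding of_real_add complex_norm_square by (simp add: mult.commute)
  then show "(cmod b)^2 + (cmod d)^2 = 1" using of_real_eq_1_iff by blast
qed

lemma unitary2_det_norm:
  assumes "unitary2 a b c d"
  shows "cmod (a*d - b*c) = 1"
proof -
  define \<Delta> where "\<Delta> = a*d - b*c"
  note u = unitary2_coeffs[OF assms, folded \<Delta>_def]
  have "(cmod \<Delta>)^2 * ((cmod c)^2 + (cmod a)^2) = (cmod b)^2 + (cmod d)^2"
    using u(1,2) by (simp add: norm_mult power_mult_distrib algebra_simps)
  then have "(cmod \<Delta>)^2 = 1" using u(3,4) by (simp add: add.commute)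
  then have "cmod \<Delta> = 1" using norm_ge_zero[of \<Delta>] by (auto simp: power2_eq_1_iff)
  then show ?thesis by (simp add: \<Delta>_def)
qed

lemma unitary2_norm_d:
  assumes "unitary2 a b c d"
  shows "cmod d = cmod a"
  by (subst unitary2_coeffs(1)[OF assms]) (simp add: norm_mult unitary2_det_norm[OF assms])

lemma unitary2_norm_a:
  assumes "unitary2 a b c d"
  shows "(cmod a)^2 = 1 - (cmod b)^2"
  using unitary2_coeffs(4)[OF assms] unitary2_norm_d[OF assms] by simp

lemma coin_parameters:
  fixes a b c d s \<omega> :: complex
  assumes unit: "unitary2 a b c d" and sqrt: "s^2 = a*d - b*c" and a: "a \<noteq> 0"
    and \<omega>: "cmod \<omega> = 1"
  defines "z \<equiv> s * \<omega>" and "\<delta> \<equiv> complex_of_real (cmod a) * cnj \<omega>"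
    and "X \<equiv> complex_of_real (2 * Re \<omega> / cmod a)"
  obtains \<mu> \<beta> where "cmod z = 1" and "cmod \<mu> = 1" and "cmod \<beta> = cmod b"
    and "z * \<beta> = b * \<mu>" and "a * \<beta> = b * \<delta>" and "z * \<mu> * \<delta> = d"
    and "z * \<mu> = c * \<beta> + d * X - d * \<delta>"
proof
  define \<mu> where "\<mu> = s * cnj a / complex_of_real (cmod a)"
  define \<beta> where "\<beta> = b * \<mu> / z"
  have "cmod s ^ 2 = 1" using sqrt unitary2_det_norm[OF unit] by (metis norm_power)
  then have s1: "cmod s = 1" using norm_ge_zero[of s] by (auto simp: power2_eq_1_iff)
  show z1: "cmod z = 1" unfolding z_def using s1 \<omega> by (simp add: norm_mult)
  then have z0: "z \<noteq> 0" by auto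
  show \<mu>1: "cmod \<mu> = 1" unfolding \<mu>_def using s1 a by (simp add: norm_mult norm_divide)
  then have \<mu>0: "\<mu> \<noteq> 0" by auto
  show "cmod \<beta> = cmod b" unfolding \<beta>_def using \<mu>1 z1 by (simp add: norm_mult norm_divide)
  show hb: "z * \<beta> = b * \<mu>" unfolding \<beta>_def using z0 by simp
  have ca: "cnj a * a = complex_of_real ((cmod a)^2)" by (metis complex_norm_square mult.commute)
  have \<omega>c: "\<omega> * cnj \<omega> = 1" using \<omega> by (simp add: complex_norm_square[symmetric])
  have z\<delta>: "z * \<delta> = a * \<mu>"
  proof -
    have "z * \<delta> = s * complex_of_real (cmod a) * (\<omega> * cnj \<omega>)"
      unfolding z_def \<delta>_def by (simp add: algebra_simps)
    also have "\<dots> = a * \<mu>" unfolding \<omega>c \<mu>_def using a ca by (simp add: field_simps power2_eq_square)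
    finally show ?thesis .
  qed
  show "a * \<beta> = b * \<delta>" unfolding \<beta>_def using z\<delta> z0 by (simp add: field_simps)
  have \<mu>sq: "\<mu>^2 * a = d"
  proof -
    have "\<mu>^2 * a = s^2 * cnj a * (cnj a * a) / complex_of_real ((cmod a)^2)"
      unfolding \<mu>_def by (simp add: field_simps power2_eq_square)
    also have "\<dots> = (a*d - b*c) * cnj a" unfolding ca sqrt using a by simp
    finally show ?thesis using unitary2_coeffs(1)[OF unit] by simp
  qed
  show hdl: "z * \<mu> * \<delta> = d" using z\<delta> \<mu>sq by algebra
  have hX: "X * a * z * \<mu> = z^2 + a*d - b*c"
  proof -
    have "X * a * z * \<mu>
        = complex_of_real (2 * Re \<omega>) * \<omega> * s^2 * (cnj a * a) / complex_of_real ((cmod a)^2)"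
      unfolding X_def z_def \<mu>_def using a by (simp add: field_simps power2_eq_square)
    also have "\<dots> = (\<omega> + cnj \<omega>) * \<omega> * s^2"
      unfolding ca complex_add_cnj[symmetric] using a by simp
    also have "\<dots> = s^2 * \<omega>^2 + s^2 * (\<omega> * cnj \<omega>)" by (simp add: algebra_simps power2_eq_square)
    also have "\<dots> = z^2 + a*d - b*c" unfolding \<omega>c z_def using sqrt by (simp add: power_mult_distrib)
    finally show ?thesis .
  qed
  have "(z * a * \<mu>) * (z * \<mu>) = (z * a * \<mu>) * (c * \<beta> + d * X - d * \<delta>)"
    using hb hdl \<mu>sq hX by algebra
  then show "z * \<mu> = c * \<beta> + d * X - d * \<delta>" using z0 \<mu>0 a by simp
qed

lemma transfer_ansatz:
  fixes a b c d z \<mu> \<beta> \<delta> X :: complex and V :: "nat \<Rightarrow> complex"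
  assumes hb: "z * \<beta> = b * \<mu>" and hab: "a * \<beta> = b * \<delta>" and hdl: "z * \<mu> * \<delta> = d"
    and key: "z * \<mu> = c * \<beta> + d * X - d * \<delta>" and \<mu>: "\<mu> \<noteq> 0"
    and V: "\<And>k. V (Suc (Suc k)) = X * V (Suc k) - V k"
  defines "pL \<equiv> \<lambda>k. V k * \<beta> / \<mu>^k" and "pR \<equiv> \<lambda>k. (V (Suc k) - \<delta> * V k) / \<mu>^k"
  shows "z * pL (Suc k) = a * pL k + b * pR k"
    and "z * pR k = c * pL (Suc k) + d * pR (Suc k)"
proof -
  have "a * pL k + b * pR k = (V k * (a * \<beta>) + b * V (Suc k) - V k * (b * \<delta>)) / \<mu>^k"
    unfolding pL_def pR_def using \<mu> by (simp add: field_simps)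
  also have "\<dots> = z * pL (Suc k)"
    unfolding pL_def using \<mu> hb hab by (simp add: field_simps)
  finally show "z * pL (Suc k) = a * pL k + b * pR k" ..
  have "c * pL (Suc k) + d * pR (Suc k)
      = (V (Suc k) * (c * \<beta> + d * X - d * \<delta>) - d * V k) / \<mu>^(Suc k)"
    unfolding pL_def pR_def V using \<mu> by (simp add: field_simps)
  also have "\<dots> = (V (Suc k) * (z * \<mu>) - (z * \<mu> * \<delta>) * V k) / \<mu>^(Suc k)"
    using key hdl by simp
  also have "\<dots> = z * pR k"
    unfolding pR_def using \<mu> by (simp add: field_simps)
  finally show "z * pR k = c * pL (Suc k) + d * pR (Suc k)" ..
qed

lemma solves_iff:
  "solves a b c d M z \<phi> \<longleftrightarrow>
     (\<forall>n. \<not> (0 \<le> n \<and> n < int M) \<longrightarrow> \<phi> n = (0, 0)) \<and>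
     (\<forall>n. 0 \<le> n \<and> n < int M \<longrightarrow>
        z * fst (\<phi> n) = a * fst (extM M \<phi> (n+1)) + b * snd (extM M \<phi> (n+1)) \<and>
        z * snd (\<phi> n) = c * fst (extM M \<phi> (n-1)) + d * snd (extM M \<phi> (n-1)) + (if n = 0 then 1 else 0))"
  unfolding solves_def EM_def Let_def by (auto simp: algebra_simps)

lemma solves_backward_eq:
  fixes a b c d z :: complex and pL pR :: "nat \<Rightarrow> complex"
  assumes sol: "solves a b c d M z \<phi>" and M: "M \<ge> 1" and nz: "z \<noteq> 0" "d \<noteq> 0"
    and p0: "pL 0 = 0" "pR 0 = 1"
    and rec1: "\<And>k. z * pL (Suc k) = a * pL k + b * pR k"
    and rec2: "\<And>k. z * pR k = c * pL (Suc k) + d * pR (Suc k)"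
    and k: "k \<le> M - 1"
  shows "\<phi> (int (M - 1 - k)) = (snd (\<phi> (int M - 1)) * pL k, snd (\<phi> (int M - 1)) * pR k)"
proof -
  define \<rho> where "\<rho> = snd (\<phi> (int M - 1))"
  have eqs: "\<And>n. 0 \<le> n \<Longrightarrow> n < int M \<Longrightarrow>
        z * fst (\<phi> n) = a * fst (extM M \<phi> (n+1)) + b * snd (extM M \<phi> (n+1)) \<and>
        z * snd (\<phi> n) = c * fst (extM M \<phi> (n-1)) + d * snd (extM M \<phi> (n-1)) + (if n = 0 then 1 else 0)"
    using sol unfolding solves_iff by blast
  show ?thesis using k
  proof (induction k)
    case 0
    have "z * fst (\<phi> (int M - 1)) = 0" using eqs[of "int M - 1"] M by (simp add: extM_def)
    then show ?case using M nz p0 by (simp add: of_nat_diff prod_eq_iff)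
  next
    case (Suc k)
    define n where "n = int (M - 1 - k)"
    have IH: "\<phi> n = (\<rho> * pL k, \<rho> * pR k)" using Suc n_def \<rho>_def by simp
    have n: "n \<ge> 1" "n < int M" using Suc.prems M unfolding n_def by auto
    have m: "int (M - 1 - Suc k) = n - 1" using Suc.prems unfolding n_def by simp
    have e1: "z * fst (\<phi> (n-1)) = a * fst (\<phi> n) + b * snd (\<phi> n)"
      using eqs[of "n-1"] n by (simp add: extM_def)
    have e2: "z * snd (\<phi> n) = c * fst (\<phi> (n-1)) + d * snd (\<phi> (n-1))"
      using eqs[of n] n by (simp add: extM_def)
    have "z * fst (\<phi> (n-1)) = z * (\<rho> * pL (Suc k))"
      using e1 IH rec1[of k] by (simp add: algebra_simps)
    then have f: "fst (\<phi> (n-1)) = \<rho> * pL (Suc k)" using nz by simp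
    have "d * snd (\<phi> (n-1)) = \<rho> * (z * pR k) - c * (\<rho> * pL (Suc k))"
      using e2 IH f by (simp add: algebra_simps)
    also have "\<dots> = d * (\<rho> * pR (Suc k))" using rec2[of k] by (simp add: algebra_simps)
    finally have "snd (\<phi> (n-1)) = \<rho> * pR (Suc k)" using nz by simp
    then show ?case using f m \<rho>_def by (simp add: prod_eq_iff)
  qed
qed

lemma solves_reversed:
  fixes a b c d z :: complex and pL pR :: "nat \<Rightarrow> complex"
  assumes M: "M \<ge> 1" and z: "z \<noteq> 0"
    and p0: "pL 0 = 0" "pR 0 = 1"
    and rec1: "\<And>k. z * pL (Suc k) = a * pL k + b * pR k"
    and rec2: "\<And>k. z * pR k = c * pL (Suc k) + d * pR (Suc k)"
    and den: "pR (M - 1) \<noteq> 0"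
  defines "r \<equiv> 1 / (z * pR (M - 1))"
  shows "solves a b c d M z
     (\<lambda>n. if 0 \<le> n \<and> n < int M then (r * pL (nat (int M - 1 - n)), r * pR (nat (int M - 1 - n))) else (0, 0))"
    (is "solves _ _ _ _ _ _ ?phi")
  unfolding solves_iff
proof (intro conjI allI impI)
  fix n :: int assume n: "0 \<le> n \<and> n < int M"
  define k where "k = nat (int M - 1 - n)"
  show "z * fst (?phi n) = a * fst (extM M ?phi (n+1)) + b * snd (extM M ?phi (n+1))"
  proof (cases "n = int M - 1")
    case True
    then show ?thesis using n p0 by (simp add: extM_def)
  next
    case False
    then have k: "k = Suc (nat (int M - 1 - (n+1)))"
      using n unfolding k_def by (subst Suc_nat_eq_nat_zadd1; simp)
    have "z * fst (?phi n) = r * (z * pL k)" using n k_def by simp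
    also have "\<dots> = r * (a * pL (nat (int M - 1 - (n+1))) + b * pR (nat (int M - 1 - (n+1))))"
      using rec1 k by simp
    also have "\<dots> = a * fst (extM M ?phi (n+1)) + b * snd (extM M ?phi (n+1))"
      using n False by (simp add: extM_def algebra_simps)
    finally show ?thesis .
  qed
  show "z * snd (?phi n)
      = c * fst (extM M ?phi (n-1)) + d * snd (extM M ?phi (n-1)) + (if n = 0 then 1 else 0)"
  proof (cases "n = 0")
    case True
    have "nat (int M - 1) = M - 1" using M by simp
    then show ?thesis using True M z den by (simp add: extM_def r_def)
  next
    case False
    have k: "nat (int M - 1 - (n-1)) = Suc k"
      using n False unfolding k_def by (subst Suc_nat_eq_nat_zadd1; simp)
    have "z * snd (?phi n) = r * (z * pR k)" using n k_def by simp
    also have "\<dots> = r * (c * pL (Suc k) + d * pR (Suc k))" using rec2 by simp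
    also have "\<dots> = c * fst (extM M ?phi (n-1)) + d * snd (extM M ?phi (n-1))"
      using n False k by (simp add: extM_def algebra_simps)
    finally show ?thesis using False by simp
  qed
qed auto

lemma the_solves_eq:
  fixes a b c d z :: complex and pL pR :: "nat \<Rightarrow> complex"
  assumes M: "M \<ge> 1" and nz: "z \<noteq> 0" "d \<noteq> 0"
    and p0: "pL 0 = 0" "pR 0 = 1"
    and rec1: "\<And>k. z * pL (Suc k) = a * pL k + b * pR k"
    and rec2: "\<And>k. z * pR k = c * pL (Suc k) + d * pR (Suc k)"
    and den: "pR (M - 1) \<noteq> 0"
  defines "r \<equiv> 1 / (z * pR (M - 1))"
  shows "(THE \<phi>. solves a b c d M z \<phi>) =
     (\<lambda>n. if 0 \<le> n \<and> n < int M then (r * pL (nat (int M - 1 - n)), r * pR (nat (int M - 1 - n))) else (0, 0))"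
    (is "_ = ?phi")
proof (rule the_equality)
  show "solves a b c d M z ?phi" unfolding r_def by (rule solves_reversed[OF M nz(1) p0 rec1 rec2 den])
next
  fix \<phi> assume sol: "solves a b c d M z \<phi>"
  note backward = solves_backward_eq[OF sol M nz p0 rec1 rec2]
  have "\<phi> 0 = (snd (\<phi> (int M - 1)) * pL (M-1), snd (\<phi> (int M - 1)) * pR (M-1))"
    using backward[of "M-1"] by simp
  moreover have "z * snd (\<phi> 0) = 1" using sol M unfolding solves_iff by (auto simp: extM_def)
  ultimately have \<rho>: "snd (\<phi> (int M - 1)) = r" using nz den unfolding r_def by (simp add: field_simps)
  show "\<phi> = ?phi"
  proof
    fix n
    show "\<phi> n = ?phi n"
    proof (cases "0 \<le> n \<and> n < int M")
      case True
      define k where "k = nat (int M - 1 - n)"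
      have "k \<le> M - 1" "int (M - 1 - k) = n" using True unfolding k_def by auto
      then show ?thesis using backward[of k] True \<rho> k_def by simp
    qed (use sol in \<open>auto simp: solves_iff\<close>)
  qed
qed

lemma sum_rev_int:
  fixes f :: "nat \<Rightarrow> 'a::comm_monoid_add"
  shows "(\<Sum>n\<in>{0..<int M}. f (nat (int M - 1 - n))) = (\<Sum>k<M. f k)"
proof -
  have "{0..<int M} = int ` {..<M}" by (simp add: image_atLeastZeroLessThan_int atLeast0LessThan)
  then have "(\<Sum>n\<in>{0..<int M}. f (nat (int M - 1 - n))) = (\<Sum>i<M. f (nat (int M - 1 - int i)))"
    by (simp add: sum.reindex)
  also have "\<dots> = (\<Sum>i<M. f (M - Suc i))"
    by (intro sum.cong refl) (simp add: nat_diff_distrib)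
  also have "\<dots> = (\<Sum>k<M. f k)" by (rule sum.nat_diff_reindex)
  finally show ?thesis .
qed

lemma energy_eq_amplitudes:
  fixes a b c d s \<omega> :: complex and pL pR :: "nat \<Rightarrow> complex"
  assumes M: "M \<ge> 1" and z: "cmod (s * \<omega>) = 1" and d: "d \<noteq> 0"
    and p0: "pL 0 = 0" "pR 0 = 1"
    and rec1: "\<And>k. s * \<omega> * pL (Suc k) = a * pL k + b * pR k"
    and rec2: "\<And>k. s * \<omega> * pR k = c * pL (Suc k) + d * pR (Suc k)"
    and den: "pR (M - 1) \<noteq> 0"
  shows "energy a b c d s M \<omega> = (\<Sum>k<M. (cmod (pL k))^2 + (cmod (pR k))^2) / (cmod (pR (M - 1)))^2"
proof -
  define r where "r = 1 / (s * \<omega> * pR (M - 1))"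
  have r: "(cmod r)^2 = 1 / (cmod (pR (M - 1)))^2"
    unfolding r_def using z by (simp add: norm_divide norm_mult power_divide)
  have z0: "s * \<omega> \<noteq> 0" using z by auto
  have "energy a b c d s M \<omega>
      = (\<Sum>n\<in>{0..<int M}. normsq2 (r * pL (nat (int M - 1 - n)), r * pR (nat (int M - 1 - n))))"
    unfolding energy_def Let_def r_def the_solves_eq[OF M z0 d p0 rec1 rec2 den]
    by (intro sum.cong refl) auto
  also have "\<dots> = (\<Sum>k<M. normsq2 (r * pL k, r * pR k))" by (rule sum_rev_int)
  also have "\<dots> = (\<Sum>k<M. (cmod r)^2 * ((cmod (pL k))^2 + (cmod (pR k))^2))"
    unfolding normsq2_def by (simp add: norm_mult power_mult_distrib algebra_simps)
  finally show ?thesis unfolding r by (simp add: sum_divide_distrib)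
qed

text \<open>\<open>cheb x k\<close> is the Chebyshev polynomial of the second kind \<open>U\<^bsub>k-1\<^esub>(x)\<close>.\<close>
fun cheb :: "real \<Rightarrow> nat \<Rightarrow> real" where
  "cheb x 0 = 0"
| "cheb x (Suc 0) = 1"
| "cheb x (Suc (Suc k)) = 2 * x * cheb x (Suc k) - cheb x k"

lemma cheb_cassini: "(cheb x (Suc k))^2 - 2 * x * cheb x k * cheb x (Suc k) + (cheb x k)^2 = 1"
proof (induction k)
  case 0
  then show ?case by simp
next
  case (Suc k)
  then show ?case by (simp add: algebra_simps power2_eq_square)
qed

lemma cmod_of_real_diff_mult_square:
  fixes v w :: real and \<delta> :: complex
  shows "(cmod (of_real w - \<delta> * of_real v))^2 = w^2 - 2 * v * w * Re \<delta> + v^2 * (cmod \<delta>)^2"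
  unfolding cmod_power2 by (simp add: power2_eq_square algebra_simps)

lemma energy_cheb:
  fixes a b c d s \<omega> :: complex
  assumes unit: "unitary2 a b c d" and sqrt: "s^2 = a*d - b*c" and a: "a \<noteq> 0"
    and \<omega>: "cmod \<omega> = 1" and M: "M \<ge> 1"
  defines "x \<equiv> Re \<omega> / cmod a" and "q \<equiv> (cmod b)^2"
  shows "energy a b c d s M \<omega>
    = (real M + 2 * q * (\<Sum>k<M. x * cheb x k * cheb x (Suc k))) / (1 - q + q * (cheb x M)^2)"
proof -
  define \<delta> where "\<delta> = complex_of_real (cmod a) * cnj \<omega>"
  define X where "X = complex_of_real (2 * Re \<omega> / cmod a)"
  obtain \<mu> \<beta> where z1: "cmod (s * \<omega>) = 1" and \<mu>1: "cmod \<mu> = 1" and \<beta>: "cmod \<beta> = cmod b"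
    and hb: "s * \<omega> * \<beta> = b * \<mu>" and hab: "a * \<beta> = b * \<delta>" and hdl: "s * \<omega> * \<mu> * \<delta> = d"
    and key: "s * \<omega> * \<mu> = c * \<beta> + d * X - d * \<delta>"
    using coin_parameters[OF unit sqrt a \<omega>] unfolding \<delta>_def X_def by blast
  have \<mu>0: "\<mu> \<noteq> 0" using \<mu>1 by auto
  have d0: "d \<noteq> 0" using unitary2_norm_d[OF unit] a by auto
  have aq: "(cmod a)^2 = 1 - q" unfolding q_def by (rule unitary2_norm_a[OF unit])
  define U where "U = cheb x"
  define V where "V k = complex_of_real (U k)" for k
  have V: "V (Suc (Suc k)) = X * V (Suc k) - V k" for k
    unfolding V_def U_def X_def x_def by simp
  define pL where "pL = (\<lambda>k. V k * \<beta> / \<mu>^k)"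
  define pR where "pR = (\<lambda>k. (V (Suc k) - \<delta> * V k) / \<mu>^k)"
  have rec1: "s * \<omega> * pL (Suc k) = a * pL k + b * pR k" for k
    unfolding pL_def pR_def by (rule transfer_ansatz(1)[where V = V, OF hb hab hdl key \<mu>0 V])
  have rec2: "s * \<omega> * pR k = c * pL (Suc k) + d * pR (Suc k)" for k
    unfolding pL_def pR_def by (rule transfer_ansatz(2)[where V = V, OF hb hab hdl key \<mu>0 V])
  have p0: "pL 0 = 0" "pR 0 = 1" unfolding pL_def pR_def V_def U_def by simp_all
  have Re\<delta>: "Re \<delta> = (1 - q) * x" and cmod\<delta>: "(cmod \<delta>)^2 = 1 - q"
    unfolding \<delta>_def x_def using a \<omega> aq[symmetric] by (simp_all add: norm_mult power2_eq_square)
  have normR: "(cmod (pR k))^2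
      = (U (Suc k))^2 - 2 * (1 - q) * x * U k * U (Suc k) + (1 - q) * (U k)^2" for k
    unfolding pR_def V_def using \<mu>1
    by (simp add: norm_divide norm_power cmod_of_real_diff_mult_square Re\<delta> cmod\<delta> algebra_simps)
  have normL: "(cmod (pL k))^2 = q * (U k)^2" for k
    unfolding pL_def V_def q_def using \<mu>1 \<beta>
    by (simp add: norm_mult norm_divide norm_power power_mult_distrib)
  have cassini: "(U (Suc k))^2 - 2 * x * U k * U (Suc k) + (U k)^2 = 1" for k
    unfolding U_def by (rule cheb_cassini)
  have amp: "(cmod (pL k))^2 + (cmod (pR k))^2 = 1 + 2 * q * (x * U k * U (Suc k))" for k
    using cassini[of k] unfolding normL normR by (simp add: algebra_simps)
  have "(cmod (pR (M - 1)))^2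
      = (1 - q) * ((U (Suc (M - 1)))^2 - 2 * x * U (M - 1) * U (Suc (M - 1)) + (U (M - 1))^2)
        + q * (U (Suc (M - 1)))^2"
    unfolding normR by (simp add: algebra_simps)
  then have den: "(cmod (pR (M - 1)))^2 = 1 - q + q * (U M)^2"
    unfolding cassini using M by simp
  have "1 - q > 0" unfolding aq[symmetric] using a by simp
  then have "1 - q + q * (U M)^2 > 0" unfolding q_def by (simp add: add_pos_nonneg)
  then have pR0: "pR (M - 1) \<noteq> 0" using den by auto
  have "energy a b c d s M \<omega> = (\<Sum>k<M. 1 + 2 * q * (x * U k * U (Suc k))) / (1 - q + q * (U M)^2)"
    unfolding energy_eq_amplitudes[OF M z1 d0 p0 rec1 rec2 pR0] amp den ..
  also have "\<dots> = (real M + 2 * q * (\<Sum>k<M. x * U k * U (Suc k))) / (1 - q + q * (U M)^2)"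
    by (simp add: sum.distrib sum_distrib_left)
  finally show ?thesis unfolding U_def .
qed

lemma sinh_Suc_Suc_mult:
  "sinh (real (Suc (Suc k)) * t) = 2 * cosh t * sinh (real (Suc k) * t) - sinh (real k * t)"
proof -
  have "real (Suc (Suc k)) * t = real (Suc k) * t + t" "real k * t = real (Suc k) * t - t"
    by (simp_all add: algebra_simps)
  then show ?thesis by (simp only: sinh_add sinh_diff) (simp add: algebra_simps)
qed

lemma cheb_cosh:
  assumes "\<epsilon>^2 = 1" and "sinh \<theta> \<noteq> 0"
  shows "cheb (\<epsilon> * cosh \<theta>) k = \<epsilon>^(k+1) * sinh (real k * \<theta>) / sinh \<theta>"
proof -
  have "x = \<epsilon> * cosh \<theta> \<Longrightarrow> cheb x k = \<epsilon>^(k+1) * sinh (real k * \<theta>) / sinh \<theta>" for x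
  proof (induction x k rule: cheb.induct)
    case (2 x)
    then show ?case using assms by (simp add: power2_eq_square)
  next
    case (3 x k)
    have \<epsilon>\<epsilon>: "\<epsilon> * \<epsilon> = 1" using assms(1) by (simp add: power2_eq_square)
    have "cheb x (Suc (Suc k))
        = \<epsilon>^(k+1) * (2 * (\<epsilon> * \<epsilon>) * cosh \<theta> * sinh (real (Suc k) * \<theta>) - sinh (real k * \<theta>)) / sinh \<theta>"
      using 3 assms(2) by (simp add: field_simps)
    also have "\<dots> = (\<epsilon>^(k+1) * (\<epsilon> * \<epsilon>)) * sinh (real (Suc (Suc k)) * \<theta>) / sinh \<theta>"
      by (simp only: \<epsilon>\<epsilon> sinh_Suc_Suc_mult) simp
    finally show ?case by (simp add: algebra_simps)
  qed simp
  then show ?thesis by simp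
qed

lemma cheb_cosh_square:
  assumes "\<epsilon>^2 = 1" and "sinh \<theta> \<noteq> 0"
  shows "(cheb (\<epsilon> * cosh \<theta>) k)^2 = (sinh (real k * \<theta>))^2 / (sinh \<theta>)^2"
proof -
  have "(\<epsilon>^(k+1))^2 = 1" using assms(1) by (metis power_mult mult.commute power_one)
  then show ?thesis using assms by (simp add: cheb_cosh power_divide power_mult_distrib)
qed

lemma cheb_cosh_mult_Suc:
  assumes "\<epsilon>^2 = 1" and "sinh \<theta> \<noteq> 0"
  shows "\<epsilon> * cosh \<theta> * cheb (\<epsilon> * cosh \<theta>) k * cheb (\<epsilon> * cosh \<theta>) (Suc k)
    = cosh \<theta> * sinh (real k * \<theta>) * sinh (real (Suc k) * \<theta>) / (sinh \<theta>)^2"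
proof -
  have "(\<epsilon> * \<epsilon>^(k+1))^2 = 1"
    using assms(1) by (metis power2_eq_square power_mult_distrib power_one)
  then have "\<epsilon> * \<epsilon>^(k+1) * \<epsilon>^(Suc k+1) = 1" by (simp add: power2_eq_square)
  then show ?thesis
    unfolding cheb_cosh[OF assms] by (simp add: power2_eq_square mult_ac del: power_Suc)
qed

lemma sum_sinh_mult_sinh_Suc:
  "4 * sinh t * (\<Sum>k<M. sinh (real k * t) * sinh (real (Suc k) * t))
     = sinh (2 * real M * t) - 2 * real M * cosh t * sinh t"
proof (induction M)
  case 0
  then show ?case by simp
next
  case (Suc M)
  have a: "real (Suc M) * t = real M * t + t" "2 * real (Suc M) * t = 2 * (real M * t) + 2 * t"
    "2 * real M * t = 2 * (real M * t)"
    by (simp_all add: algebra_simps)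
  have "4 * sinh t * (\<Sum>k<Suc M. sinh (real k * t) * sinh (real (Suc k) * t))
     = 4 * sinh t * (\<Sum>k<M. sinh (real k * t) * sinh (real (Suc k) * t))
       + 4 * sinh t * (sinh (real M * t) * sinh (real (Suc M) * t))"
    by (simp add: algebra_simps)
  also have "\<dots> = sinh (2 * real (Suc M) * t) - 2 * real (Suc M) * cosh t * sinh t"
    unfolding Suc.IH unfolding a sinh_add cosh_add sinh_double cosh_double
    using cosh_square_eq[of "real M * t"] cosh_square_eq[of t]
    by (simp add: algebra_simps power2_eq_square)
  finally show ?case .
qed

definition mean_energy_sinh :: "real \<Rightarrow> real \<Rightarrow> nat \<Rightarrow> real" where
  "mean_energy_sinh q \<theta> M =
    ((sinh \<theta>)^2 + q * cosh \<theta> * (sinh (2 * (real M * \<theta>)) / (2 * (real M * sinh \<theta>)) - cosh \<theta>))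
      / ((1 - q) * (sinh \<theta>)^2 + q * (sinh (real M * \<theta>))^2)"

lemma energy_sinh:
  fixes a b c d s \<omega> :: complex and \<theta> :: real
  assumes unit: "unitary2 a b c d" and sqrt: "s^2 = a*d - b*c" and a: "a \<noteq> 0"
    and \<omega>: "cmod \<omega> = 1" and M: "M \<ge> 1"
    and \<theta>: "\<theta> > 0" and cosh: "cosh \<theta> = cmod (xfun a \<omega>)"
  defines "q \<equiv> (cmod b)^2"
  shows "energy a b c d s M \<omega> / real M = mean_energy_sinh q \<theta> M"
proof -
  define x where "x = Re \<omega> / cmod a"
  have inv: "inverse \<omega> = cnj \<omega>"
    using \<omega> by (intro inverse_unique) (simp add: complex_norm_square[symmetric])
  have "xfun a \<omega> = complex_of_real x"
    unfolding xfun_def inv complex_add_cnj x_def using a by (simp add: field_simps)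
  then have cosh_x: "cosh \<theta> = \<bar>x\<bar>" using cosh by simp
  define \<epsilon> where "\<epsilon> = sgn x"
  have x: "x = \<epsilon> * cosh \<theta>" unfolding \<epsilon>_def cosh_x by (simp add: sgn_mult_abs)
  have \<epsilon>: "\<epsilon>^2 = 1" using cosh_x cosh_real_pos[of \<theta>] by (auto simp: \<epsilon>_def sgn_if)
  have sh: "sinh \<theta> > 0" using \<theta> by simp
  then have sh0: "sinh \<theta> \<noteq> 0" by simp
  have q: "0 \<le> q" "q < 1"
    using unitary2_norm_a[OF unit] zero_less_power2[of "cmod a"] a unfolding q_def by auto
  have "(\<Sum>k<M. x * cheb x k * cheb x (Suc k))
      = cosh \<theta> * (\<Sum>k<M. sinh (real k * \<theta>) * sinh (real (Suc k) * \<theta>)) / (sinh \<theta>)^2"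
    unfolding x cheb_cosh_mult_Suc[OF \<epsilon> sh0] by (simp add: sum_distrib_left sum_divide_distrib mult.assoc)
  also have "(\<Sum>k<M. sinh (real k * \<theta>) * sinh (real (Suc k) * \<theta>))
      = (sinh (2 * (real M * \<theta>)) - 2 * real M * cosh \<theta> * sinh \<theta>) / (4 * sinh \<theta>)"
    using sum_sinh_mult_sinh_Suc[of \<theta> M] sh0 by (simp add: field_simps mult.assoc)
  also have "cosh \<theta> * \<dots> / (sinh \<theta>)^2
      = cosh \<theta> * (sinh (2 * (real M * \<theta>)) - 2 * real M * cosh \<theta> * sinh \<theta>) / (4 * (sinh \<theta>)^3)"
    by (simp add: power2_eq_square power3_eq_cube)
  finally have sum: "(\<Sum>k<M. x * cheb x k * cheb x (Suc k)) = \<dots>" .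
  have UM: "(cheb x M)^2 = (sinh (real M * \<theta>))^2 / (sinh \<theta>)^2"
    unfolding x by (rule cheb_cosh_square[OF \<epsilon> sh0])
  have den: "(1 - q) * (sinh \<theta>)^2 + q * (sinh (real M * \<theta>))^2 > 0"
    using q sh by (intro add_pos_nonneg) auto
  have M0: "real M > 0" using M by simp
  have "real M + 2 * q * (cosh \<theta> * (sinh (2 * (real M * \<theta>)) - 2 * real M * cosh \<theta> * sinh \<theta>)
        / (4 * (sinh \<theta>)^3))
      = real M * ((sinh \<theta>)^2 + q * cosh \<theta> * (sinh (2 * (real M * \<theta>)) / (2 * (real M * sinh \<theta>))
        - cosh \<theta>)) / (sinh \<theta>)^2"
    using sh0 M0 by (simp add: field_simps power2_eq_square power3_eq_cube)
  moreover have "1 - q + q * ((sinh (real M * \<theta>))^2 / (sinh \<theta>)^2)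
      = ((1 - q) * (sinh \<theta>)^2 + q * (sinh (real M * \<theta>))^2) / (sinh \<theta>)^2"
    using sh0 by (simp add: field_simps)
  ultimately show ?thesis
    unfolding energy_cheb[OF unit sqrt a \<omega> M, folded x_def q_def] sum UM mean_energy_sinh_def
    using sh0 den M0 by simp
qed

lemma tendsto_sinh_div_self: "((\<lambda>t::real. sinh t / t) \<longlongrightarrow> 1) (at 0)"
proof -
  have "((\<lambda>t::real. sinh t) has_field_derivative cosh 0) (at 0)"
    by (auto intro!: derivative_eq_intros)
  then show ?thesis unfolding DERIV_def by simp
qed

lemma energy_sinh_limit:
  fixes \<theta> :: "nat \<Rightarrow> real" and q \<theta>star :: real
  assumes q: "q \<noteq> 0" and \<theta>: "eventually (\<lambda>M. \<theta> M \<noteq> 0) sequentially"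
    and lim: "(\<lambda>M. real M * \<theta> M) \<longlonglongrightarrow> \<theta>star" and \<theta>star: "\<theta>star > 0"
  shows "(\<lambda>M. mean_energy_sinh q (\<theta> M) M)
         \<longlonglongrightarrow> (1 / (sinh \<theta>star)^2) * (sinh (2 * \<theta>star) / (2 * \<theta>star) - 1)"
proof -
  have "(\<lambda>M. (real M * \<theta> M) * inverse (real M)) \<longlonglongrightarrow> \<theta>star * 0"
    by (intro tendsto_mult lim tendsto_inverse_0_at_top filterlim_real_sequentially)
  moreover have "eventually (\<lambda>M. (real M * \<theta> M) * inverse (real M) = \<theta> M) sequentially"
    using eventually_gt_at_top[of 0] by eventually_elim simp
  ultimately have "\<theta> \<longlonglongrightarrow> 0" by (simp add: Lim_transform_eventually)
  then have \<theta>0: "filterlim \<theta> (at 0) sequentially"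
    using \<theta> by (simp add: filterlim_at)
  have "(\<lambda>M. (real M * \<theta> M) * (sinh (\<theta> M) / \<theta> M)) \<longlonglongrightarrow> \<theta>star * 1"
    by (intro tendsto_mult lim filterlim_compose[OF tendsto_sinh_div_self \<theta>0])
  moreover have "eventually (\<lambda>M. (real M * \<theta> M) * (sinh (\<theta> M) / \<theta> M) = real M * sinh (\<theta> M)) sequentially"
    using \<theta> by eventually_elim simp
  ultimately have Msinh: "(\<lambda>M. real M * sinh (\<theta> M)) \<longlonglongrightarrow> \<theta>star"
    by (simp add: Lim_transform_eventually)
  have "(\<lambda>M. mean_energy_sinh q (\<theta> M) M)
        \<longlonglongrightarrow> ((sinh 0)^2 + q * cosh 0 * (sinh (2 * \<theta>star) / (2 * \<theta>star) - cosh 0))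
            / ((1 - q) * (sinh 0)^2 + q * (sinh \<theta>star)^2)"
    unfolding mean_energy_sinh_def using q \<theta>star
    by (intro tendsto_intros lim Msinh filterlim_compose[OF tendsto_ident_at \<theta>0]) auto
  moreover have "((sinh 0)^2 + q * cosh 0 * (sinh (2 * \<theta>star) / (2 * \<theta>star) - cosh 0))
            / ((1 - q) * (sinh 0)^2 + q * (sinh \<theta>star)^2)
      = (1 / (sinh \<theta>star)^2) * (sinh (2 * \<theta>star) / (2 * \<theta>star) - 1)"
    using q \<theta>star by (simp add: field_simps)
  ultimately show ?thesis by simp
qed

theorem mainTheorem10:
  fixes a b c d s :: complex and \<omega> :: "nat \<Rightarrow> complex" and \<theta> :: "nat \<Rightarrow> real"
    and \<theta>star :: real
  assumes unit: "unitary2 a b c d"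
    and sqrt: "s\<^sup>2 = a * d - b * c"
    and nz: "a * b * c * d \<noteq> 0"
    and out: "\<And>M. M \<ge> 1 \<Longrightarrow> \<omega> M \<in> Bout a"
    and thpos: "\<And>M. M \<ge> 1 \<Longrightarrow> \<theta> M > 0"
    and thcosh: "\<And>M. M \<ge> 1 \<Longrightarrow> cosh (\<theta> M) = cmod (xfun a (\<omega> M))"
    and lim: "(\<lambda>M. real M * \<theta> M) \<longlonglongrightarrow> \<theta>star"
    and stpos: "\<theta>star > 0"
  shows "(\<lambda>M. energy a b c d s M (\<omega> M) / real M) \<longlonglongrightarrow>
           (1 / (sinh \<theta>star)\<^sup>2) * (sinh (2 * \<theta>star) / (2 * \<theta>star) - 1)"
proof -
  define q where "q = (cmod b)^2"
  have a: "a \<noteq> 0" and q: "q \<noteq> 0" using nz unfolding q_def by auto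
  have \<theta>: "eventually (\<lambda>M. \<theta> M \<noteq> 0) sequentially"
    using eventually_ge_at_top[of 1] by eventually_elim (use thpos in fastforce)
  have "eventually (\<lambda>M. mean_energy_sinh q (\<theta> M) M = energy a b c d s M (\<omega> M) / real M) sequentially"
    using eventually_ge_at_top[of 1]
  proof eventually_elim
    case (elim M)
    have "cmod (\<omega> M) = 1" using out[OF elim] unfolding Bout_def by simp
    from energy_sinh[OF unit sqrt a this elim thpos[OF elim] thcosh[OF elim]]
    show ?case unfolding q_def by simp
  qed
  with energy_sinh_limit[OF q \<theta> lim stpos] show ?thesis
    by (rule Lim_transform_eventually)
qed

end
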